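(* Let $R$ be a finite commutative local ring and $G=\mathrm{GL}_n(R)$. For all $r,t\in W$ with $\ell(t)\le\ell(r)$ and $t\neq r$, one has $ULV\cap t^{-1}Ur=\emptyset$.
   Context: $L$ is the subgroup of diagonal matrices, $U$ the upper unitriangular and $V$ the lower unitriangular matrices in $G$. $W\cong S_n$ is the group of permutation matrices in $G$, and $\ell$ is the word length on $W$ with respect to the generating set of simple transpositions $\{(1\,2),(2\,3),\ldots,(n-1\,n)\}$. $ULV$ denotes the set of products $ulv$ and $t^{-1}Ur$ the set of products $t^{-1}ur$. *)

theory Defs
  imports "Jordan_Normal_Form.Matrix"
begin

definition ring_ideal :: "'a::comm_ring_1 set \<Rightarrow> bool" where
  "ring_ideal I \<longleftrightarrow> 0 \<in> I \<and> (\<forall>x\<in>I. \<forall>y\<in>I. x + y \<in> I) \<and> (\<forall>x\<in>I. \<forall>c. c * x \<in> I)"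

definition maximal_ideal :: "'a::comm_ring_1 set \<Rightarrow> bool" where
  "maximal_ideal I \<longleftrightarrow> ring_ideal I \<and> I \<noteq> UNIV \<and>
     (\<forall>J. ring_ideal J \<and> I \<subseteq> J \<longrightarrow> J = I \<or> J = UNIV)"

definition local_ring :: "'a::comm_ring_1 itself \<Rightarrow> bool" where
  "local_ring _ \<longleftrightarrow> (\<exists>!I::'a set. maximal_ideal I)"

definition GL :: "nat \<Rightarrow> 'a::comm_ring_1 mat set" where
  "GL n = {A \<in> carrier_mat n n. invertible_mat A}"

definition mat_inv :: "nat \<Rightarrow> 'a::comm_ring_1 mat \<Rightarrow> 'a mat" where
  "mat_inv n A = (THE B. B \<in> carrier_mat n n \<and> inverts_mat A B \<and> inverts_mat B A)"

definition Umat :: "nat \<Rightarrow> 'a::comm_ring_1 mat set" where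
  "Umat n = {A \<in> GL n. \<forall>i<n. \<forall>j<n. (j < i \<longrightarrow> A $$ (i,j) = 0) \<and> (i = j \<longrightarrow> A $$ (i,j) = 1)}"

definition Vmat :: "nat \<Rightarrow> 'a::comm_ring_1 mat set" where
  "Vmat n = {A \<in> GL n. \<forall>i<n. \<forall>j<n. (i < j \<longrightarrow> A $$ (i,j) = 0) \<and> (i = j \<longrightarrow> A $$ (i,j) = 1)}"

definition Lmat :: "nat \<Rightarrow> 'a::comm_ring_1 mat set" where
  "Lmat n = {A \<in> GL n. \<forall>i<n. \<forall>j<n. i \<noteq> j \<longrightarrow> A $$ (i,j) = 0}"

definition perm_mat :: "nat \<Rightarrow> (nat \<Rightarrow> nat) \<Rightarrow> 'a::comm_ring_1 mat" where
  "perm_mat n p = mat n n (\<lambda>(i,j). if i = p j then 1 else 0)"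

definition Wmat :: "nat \<Rightarrow> 'a::comm_ring_1 mat set" where
  "Wmat n = {perm_mat n p | p. p permutes {..<n}}"

text \<open>Simple transposition (i i+1) as a permutation matrix (indices from 0).\<close>
definition simple_refl :: "nat \<Rightarrow> nat \<Rightarrow> 'a::comm_ring_1 mat" where
  "simple_refl n i = perm_mat n (Transposition.transpose i (Suc i))"

definition wlen :: "nat \<Rightarrow> 'a::comm_ring_1 mat \<Rightarrow> nat" where
  "wlen n w = (LEAST k. \<exists>is. length is = k \<and> (\<forall>i\<in>set is. Suc i < n) \<and>
                  w = foldr (\<lambda>i M. simple_refl n i * M) is (1\<^sub>m n))"

end

theory Submission
  imports Defs "Jordan_Normal_Form.Determinant"
begin

text \<open>Write \<open>t\<close> and \<open>r\<close> as the permutation matrices of \<open>p\<close> and \<open>q\<close>. If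
  \<open>u l v = t\<inverse> u' r\<close>, the \<open>(i, j)\<close> entry of \<open>u l v\<close> is \<open>u'(p i, q j)\<close>, which vanishes
  when \<open>q j < p i\<close>. Each trailing principal minor of \<open>u l v\<close> (rows and columns \<open>k..<n\<close>) is a
  product of diagonal entries of the invertible diagonal matrix \<open>l\<close>, hence a unit, so its Leibniz
  expansion has a nonzero term: a bijection \<open>\<sigma>\<close> of \<open>{k..<n}\<close> with \<open>u'(p i, q (\<sigma> i)) \<noteq> 0\<close>.
  Thus \<open>\<sigma>\<close> maps \<open>{i \<ge> k. p i > c}\<close> injectively into \<open>{j \<ge> k. q j > c}\<close>, which is the
  tableau criterion for \<open>q \<le> p\<close> in the Bruhat order. A strict Bruhat relation strictly increases
  the number of inversions, and the word length of a permutation matrix is the number of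
  inversions of its permutation, so the word length of \<open>r\<close> is smaller than that of \<open>t\<close> unless
  \<open>t = r\<close>.\<close>

definition inversions :: "nat \<Rightarrow> (nat \<Rightarrow> nat) \<Rightarrow> (nat \<times> nat) set" where
  "inversions n w = {(i,j). i < j \<and> j < n \<and> w j < w i}"

lemma finite_inversions: "finite (inversions n w)"
  unfolding inversions_def by (rule finite_subset[of _ "{..<n} \<times> {..<n}"]) auto

lemma card_inversions_swap_less:
  assumes ab: "a < b" "b < n" and qab: "q a < q b"
  shows "card (inversions n q) < card (inversions n (q \<circ> Transposition.transpose a b))"
proof -
  let ?t = "Transposition.transpose a b"
  define C where "C i j \<longleftrightarrow> (i \<in> {a,b} \<and> a < j \<and> j < b) \<or> (j \<in> {a,b} \<and> a < i \<and> i < b)" for i j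
  have C_transpose: "C (?t i) (?t j) = C i j" for i j
    unfolding C_def transpose_def using ab(1) by auto
  \<comment> \<open>Conjugation by \<open>(a b)\<close> would reverse the order of a pair \<open>C\<close> made of an endpoint and a
    point strictly between \<open>a\<close> and \<open>b\<close>; such pairs are kept as they are.\<close>
  define h where "h = (\<lambda>(i,j). if C i j then (i,j) else (?t i, ?t j))"
  have h_involution: "h (h x) = x" for x
    by (cases x) (simp add: h_def C_transpose)
  have h_maps: "h (i,j) \<in> inversions n (q \<circ> ?t) - {(a,b)}" if ij: "(i,j) \<in> inversions n q" for i j
  proof (cases "C i j")
    case True
    then show ?thesis
      using ij ab qab unfolding C_def h_def inversions_def by (cases "i = a"; cases "j = b") auto
  next
    case False
    have "(i,j) \<noteq> (a,b)"
      using ij qab by (auto simp: inversions_def)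
    then have "?t i < ?t j"
      using False ij ab(1) unfolding C_def inversions_def transpose_def by (simp split: if_split; arith)
    moreover have "?t j < n" "(?t i, ?t j) \<noteq> (a,b)"
      using ij ab by (auto simp: inversions_def transpose_def)
    ultimately show ?thesis
      using False ij by (auto simp: h_def inversions_def)
  qed
  have "inj_on h (inversions n q)"
    by (rule inj_on_inverseI) (rule h_involution)
  moreover have "h ` inversions n q \<subseteq> inversions n (q \<circ> ?t) - {(a,b)}"
    by (rule image_subsetI) (metis h_maps prod.collapse)
  ultimately have "card (inversions n q) \<le> card (inversions n (q \<circ> ?t) - {(a,b)})"
    by (intro card_inj_on_le) (simp_all add: finite_inversions)
  also have "\<dots> < card (inversions n (q \<circ> ?t))"
    by (rule card_Diff1_less[OF finite_inversions]) (use ab qab in \<open>auto simp: inversions_def\<close>)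
  finally show ?thesis .
qed

definition count_above :: "(nat \<Rightarrow> nat) \<Rightarrow> nat \<Rightarrow> nat \<Rightarrow> nat \<Rightarrow> nat" where
  "count_above w lo hi c = (\<Sum>i\<in>{lo..<hi}. if c < w i then 1 else 0)"

lemma count_above_empty [simp]: "count_above w a a c = 0"
  unfolding count_above_def by simp

lemma count_above_eq_card: "count_above w lo hi c = card {i. lo \<le> i \<and> i < hi \<and> c < w i}"
proof -
  have "count_above w lo hi c = (\<Sum>i\<in>{i \<in> {lo..<hi}. c < w i}. 1)"
    unfolding count_above_def by (rule sum.inter_filter[symmetric]) simp
  also have "\<dots> = card {i \<in> {lo..<hi}. c < w i}"
    by simp
  also have "{i \<in> {lo..<hi}. c < w i} = {i. lo \<le> i \<and> i < hi \<and> c < w i}"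
    by auto
  finally show ?thesis .
qed

lemma count_above_split:
  "lo \<le> mid \<Longrightarrow> mid \<le> hi \<Longrightarrow> count_above w lo hi c = count_above w lo mid c + count_above w mid hi c"
  unfolding count_above_def by (simp add: sum.atLeastLessThan_concat)

lemma count_above_split_at:
  assumes "lo \<le> i" "i < hi"
  shows "count_above w lo hi c = count_above w lo i c + (if c < w i then 1 else 0) + count_above w (Suc i) hi c"
proof -
  have "count_above w i (Suc i) c = (if c < w i then 1 else 0)"
    unfolding count_above_def by simp
  then show ?thesis
    using count_above_split[of lo i hi w c] count_above_split[of i "Suc i" hi w c] assms by simp
qed

lemma count_above_cong:
  "(\<And>i. lo \<le> i \<Longrightarrow> i < hi \<Longrightarrow> w i = w' i) \<Longrightarrow> count_above w lo hi c = count_above w' lo hi c"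
  unfolding count_above_def by (intro sum.cong) auto

lemma count_above_mono:
  "(\<And>i. lo \<le> i \<Longrightarrow> i < hi \<Longrightarrow> c < w i \<Longrightarrow> c' < w' i) \<Longrightarrow> count_above w lo hi c \<le> count_above w' lo hi c'"
  unfolding count_above_def by (intro sum_mono) auto

lemma count_above_permutes:
  assumes "w permutes {..<n}"
  shows "count_above w 0 n c = count_above id 0 n c"
proof -
  have "count_above id 0 n c = (\<Sum>v\<in>w ` {..<n}. if c < v then 1 else 0)"
    unfolding count_above_def permutes_image[OF assms] by (simp add: atLeast0LessThan)
  also have "\<dots> = (\<Sum>i<n. if c < w i then 1 else 0)"
    by (subst sum.reindex) (use permutes_inj[OF assms] in \<open>auto simp: inj_on_def dest: injD\<close>)
  finally show ?thesis
    unfolding count_above_def by (simp add: atLeast0LessThan)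
qed

lemma count_above_swap:
  assumes ab: "a < b" "b < n" and qab: "q a < q b"
  shows "count_above q k n c = count_above (q \<circ> Transposition.transpose a b) k n c
           + (if a < k \<and> k \<le> b \<and> q a \<le> c \<and> c < q b then 1 else 0)"
proof -
  let ?q = "q \<circ> Transposition.transpose a b"
  have agree: "count_above q lo hi c = count_above ?q lo hi c"
    if "\<And>i. lo \<le> i \<Longrightarrow> i < hi \<Longrightarrow> i \<noteq> a \<and> i \<noteq> b" for lo hi
    using that by (intro count_above_cong) auto
  consider "k \<le> a" | "a < k" "k \<le> b" | "b < k" by linarith
  then show ?thesis
  proof cases
    case 1
    have "count_above w k n c = count_above w k a c + (if c < w a then 1 else 0)
            + (count_above w (Suc a) b c + (if c < w b then 1 else 0) + count_above w (Suc b) n c)" for w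
      using count_above_split_at[of k a n w c] count_above_split_at[of "Suc a" b n w c] 1 ab by simp
    moreover have "count_above q k a c = count_above ?q k a c"
      "count_above q (Suc a) b c = count_above ?q (Suc a) b c"
      "count_above q (Suc b) n c = count_above ?q (Suc b) n c"
      by (intro agree; use ab in auto)+
    ultimately show ?thesis using 1 qab by simp
  next
    case 2
    have "count_above w k n c = count_above w k b c + (if c < w b then 1 else 0) + count_above w (Suc b) n c" for w
      using count_above_split_at[of k b n w c] 2 ab by simp
    moreover have "count_above q k b c = count_above ?q k b c"
      "count_above q (Suc b) n c = count_above ?q (Suc b) n c"
      by (intro agree; use 2 in auto)+
    ultimately show ?thesis using 2 qab by auto
  next
    case 3
    then show ?thesis using agree[of k n] ab by auto
  qed
qed

definition tableau_weight :: "nat \<Rightarrow> (nat \<Rightarrow> nat) \<Rightarrow> nat" where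
  "tableau_weight n q = (\<Sum>k<n. \<Sum>c<n. count_above q k n c)"

lemma tableau_weight_swap_less:
  assumes q: "q permutes {..<n}" and ab: "a < b" "b < n" and qab: "q a < q b"
  shows "tableau_weight n (q \<circ> Transposition.transpose a b) < tableau_weight n q"
proof -
  let ?q = "q \<circ> Transposition.transpose a b"
  note swap = count_above_swap[OF ab qab]
  have le: "count_above ?q k n c \<le> count_above q k n c" for k c
    using swap by simp
  have "q a < n"
    using permutes_in_image[OF q] ab by simp
  moreover have "count_above ?q b n (q a) < count_above q b n (q a)"
    using swap ab qab by simp
  ultimately have "(\<Sum>c<n. count_above ?q b n c) < (\<Sum>c<n. count_above q b n c)"
    using le by (intro sum_strict_mono_ex1) auto
  then show ?thesis
    unfolding tableau_weight_def using ab le by (intro sum_strict_mono_ex1) (auto intro: sum_mono)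
qed

text \<open>The tableau criterion: \<open>q\<close> lies below \<open>p\<close> in the Bruhat order iff every final segment
  of \<open>q\<close> has at least as many values above each threshold as that of \<open>p\<close>.\<close>

definition bruhat_le :: "nat \<Rightarrow> (nat \<Rightarrow> nat) \<Rightarrow> (nat \<Rightarrow> nat) \<Rightarrow> bool" where
  "bruhat_le n q p \<longleftrightarrow> (\<forall>k c. count_above p k n c \<le> count_above q k n c)"

lemma bruhat_le_first_difference:
  assumes p: "p permutes {..<n}" and q: "q permutes {..<n}" and le: "bruhat_le n q p" and "p \<noteq> q"
  obtains a where "a < n" "\<And>i. i < a \<Longrightarrow> p i = q i" "q a < p a"
    "\<And>c. count_above p a n c = count_above q a n c"
proof -
  have ex: "\<exists>i. p i \<noteq> q i"
    using \<open>p \<noteq> q\<close> by auto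
  define a where "a = (LEAST i. p i \<noteq> q i)"
  have pa: "p a \<noteq> q a"
    unfolding a_def by (rule LeastI_ex[OF ex])
  have below: "p i = q i" if "i < a" for i
    using that not_less_Least unfolding a_def by blast
  have an: "a < n"
    using pa permutes_not_in[OF p, of a] permutes_not_in[OF q, of a] by (cases "a < n") auto
  have suffix: "count_above p a n c = count_above q a n c" for c
  proof -
    have "count_above p 0 a c = count_above q 0 a c"
      using below by (intro count_above_cong) auto
    moreover have "count_above p 0 n c = count_above q 0 n c"
      using count_above_permutes[OF p] count_above_permutes[OF q] by simp
    ultimately show ?thesis
      using count_above_split[of 0 a n _ c] an by simp
  qed
  have "q a < p a"
  proof (rule ccontr)
    assume "\<not> q a < p a"
    then have "p a < q a"
      using pa by simp
    moreover have "count_above p (Suc a) n (p a) \<le> count_above q (Suc a) n (p a)"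
      using le unfolding bruhat_le_def by blast
    ultimately show False
      using suffix[of "p a"] count_above_split_at[of a a n p "p a"] count_above_split_at[of a a n q "p a"] an
      by simp
  qed
  with an below suffix show ?thesis
    using that by blast
qed

lemma bruhat_le_swap:
  assumes le: "bruhat_le n q p" and ab: "a < b" "b < n" and qab: "q a < q b" "q b \<le> p a"
    and suffix: "\<And>c. count_above p a n c = count_above q a n c"
    and between: "\<And>m. a < m \<Longrightarrow> m < b \<Longrightarrow> \<not> (q a < q m \<and> q m \<le> p a)"
  shows "bruhat_le n (q \<circ> Transposition.transpose a b) p"
proof -
  have split: "count_above w a n c = count_above w a k c + count_above w k n c" if "k \<le> n" "a \<le> k" for w k c
    using that by (intro count_above_split) auto
  have head: "count_above w a k c = (if c < w a then 1 else 0) + count_above w (Suc a) k c" if "a < k" for w k c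
    using count_above_split_at[of a a k w c] that by simp
  have "count_above p k n c \<le> count_above (q \<circ> Transposition.transpose a b) k n c" for k c
  proof (cases "a < k \<and> k \<le> b \<and> q a \<le> c \<and> c < q b")
    case False
    then have "count_above q k n c = count_above (q \<circ> Transposition.transpose a b) k n c"
      using count_above_swap[OF ab qab(1), of k c] by simp
    then show ?thesis
      using le unfolding bruhat_le_def by metis
  next
    case True
    then have k: "a < k" "k \<le> n"
      using ab by auto
    have "count_above q (Suc a) k c \<le> count_above q (Suc a) k (p a)"
    proof (rule count_above_mono)
      fix i
      assume "Suc a \<le> i" "i < k" "c < q i"
      then show "p a < q i"
        using between[of i] True by auto
    qed
    also have "\<dots> \<le> count_above p (Suc a) k (p a)"
    proof -
      have "count_above p k n (p a) \<le> count_above q k n (p a)"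
        using le unfolding bruhat_le_def by blast
      moreover have "count_above p a k (p a) + count_above p k n (p a) = count_above q a k (p a) + count_above q k n (p a)"
        using suffix[of "p a"] split[of k p "p a"] split[of k q "p a"] k by simp
      ultimately have "count_above q a k (p a) \<le> count_above p a k (p a)"
        by linarith
      then show ?thesis
        using head[OF k(1), of q "p a"] head[OF k(1), of p "p a"] qab by simp
    qed
    also have "\<dots> \<le> count_above p (Suc a) k c"
      by (rule count_above_mono) (use True qab in auto)
    finally have "count_above q a k c < count_above p a k c"
      using head[OF k(1), of q c] head[OF k(1), of p c] True qab by simp
    then have "count_above p k n c < count_above q k n c"
      using suffix[of c] split[OF k(2), of p c] split[OF k(2), of q c] k by simp
    then show ?thesis
      using count_above_swap[OF ab qab(1), of k c] True by simp
  qed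
  then show ?thesis
    unfolding bruhat_le_def by blast
qed

lemma bruhat_le_swap_step:
  assumes p: "p permutes {..<n}" and q: "q permutes {..<n}" and le: "bruhat_le n q p" and "p \<noteq> q"
  obtains a b where "a < b" "b < n" "q a < q b" "bruhat_le n (q \<circ> Transposition.transpose a b) p"
proof -
  obtain a where an: "a < n" and below: "\<And>i. i < a \<Longrightarrow> p i = q i" and qpa: "q a < p a"
    and suffix: "\<And>c. count_above p a n c = count_above q a n c"
    using bruhat_le_first_difference[OF assms] by blast
  define B where "B j \<longleftrightarrow> a < j \<and> j < n \<and> q a < q j \<and> q j \<le> p a" for j
  obtain b0 where b0: "q b0 = p a"
    using permutes_surj[OF q] by (metis surjD)
  have "b0 < n"
    using b0 an permutes_in_image[OF p, of a] permutes_in_image[OF q, of b0] by simp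
  moreover have "\<not> b0 < a"
    using below b0 permutes_inj[OF p] by (metis injD nat_neq_iff)
  ultimately have "B b0"
    using b0 qpa unfolding B_def by (cases "b0 = a") auto
  define b where "b = (LEAST j. B j)"
  have Bb: "a < b" "b < n" "q a < q b" "q b \<le> p a"
    using LeastI[of B, OF \<open>B b0\<close>] unfolding b_def B_def by auto
  have "\<not> (q a < q m \<and> q m \<le> p a)" if "a < m" "m < b" for m
    using not_less_Least[of m B] that Bb unfolding b_def B_def by auto
  with Bb suffix le show ?thesis
    using that bruhat_le_swap by blast
qed

lemma card_inversions_less_if_bruhat_le:
  assumes p: "p permutes {..<n}" and q: "q permutes {..<n}" and "bruhat_le n q p" "q \<noteq> p"
  shows "card (inversions n q) < card (inversions n p)"
  using q assms(3,4)
proof (induction "tableau_weight n q" arbitrary: q rule: less_induct)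
  case less
  obtain a b where ab: "a < b" "b < n" and qab: "q a < q b"
    and le: "bruhat_le n (q \<circ> Transposition.transpose a b) p"
    using bruhat_le_swap_step[OF p less.prems(1,2)] less.prems(3) by metis
  let ?q = "q \<circ> Transposition.transpose a b"
  have "card (inversions n q) < card (inversions n ?q)"
    by (rule card_inversions_swap_less[OF ab qab])
  moreover have "card (inversions n ?q) \<le> card (inversions n p)"
  proof (cases "?q = p")
    case False
    have "?q permutes {..<n}"
      using ab by (intro permutes_compose[OF permutes_swap_id less.prems(1)]) auto
    then show ?thesis
      using less.hyps[OF tableau_weight_swap_less[OF less.prems(1) ab qab] _ le False] by simp
  qed simp
  ultimately show ?case
    by simp
qed

lemma mat_mult_index:
  assumes "A \<in> carrier_mat n n" "B \<in> carrier_mat n n" "i < n" "j < n"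
  shows "(A * B) $$ (i,j) = (\<Sum>k<n. A $$ (i,k) * B $$ (k,j))"
  using assms by (simp add: scalar_prod_def atLeast0LessThan)

lemma perm_mat_carrier [simp]: "perm_mat n p \<in> carrier_mat n n"
  unfolding perm_mat_def by simp

lemma perm_mat_index: "i < n \<Longrightarrow> j < n \<Longrightarrow> perm_mat n p $$ (i,j) = (if i = p j then 1 else 0)"
  unfolding perm_mat_def by simp

lemma perm_mat_id: "perm_mat n id = 1\<^sub>m n"
  by (rule eq_matI) (auto simp: perm_mat_def)

lemma perm_mat_mult:
  assumes g: "g permutes {..<n}"
  shows "perm_mat n f * perm_mat n g = (perm_mat n (f \<circ> g) :: 'a::comm_ring_1 mat)"
proof (rule eq_matI)
  fix i j
  assume "i < dim_row (perm_mat n (f \<circ> g) :: 'a mat)" "j < dim_col (perm_mat n (f \<circ> g) :: 'a mat)"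
  then have ij: "i < n" "j < n"
    by (auto simp: perm_mat_def)
  have "g j < n"
    using ij permutes_in_image[OF g] by auto
  have "(perm_mat n f * perm_mat n g :: 'a mat) $$ (i,j)
      = (\<Sum>k<n. (perm_mat n f :: 'a mat) $$ (i,k) * (perm_mat n g :: 'a mat) $$ (k,j))"
    by (rule mat_mult_index) (use ij in auto)
  also have "\<dots> = (\<Sum>k<n. if k = g j then (if i = f k then 1 else 0) else 0 :: 'a)"
    by (rule sum.cong) (auto simp: perm_mat_index ij)
  also have "\<dots> = perm_mat n (f \<circ> g) $$ (i,j)"
    using \<open>g j < n\<close> ij by (simp add: perm_mat_index)
  finally show "(perm_mat n f * perm_mat n g :: 'a mat) $$ (i,j) = perm_mat n (f \<circ> g) $$ (i,j)" .
qed (auto simp: perm_mat_def)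

lemma perm_mat_inject:
  assumes p: "p permutes {..<n}" and p': "p' permutes {..<n}"
    and eq: "(perm_mat n p :: 'a::comm_ring_1 mat) = perm_mat n p'"
  shows "p = p'"
proof
  fix x
  show "p x = p' x"
  proof (cases "x < n")
    case True
    then have "p x < n"
      using permutes_in_image[OF p] by auto
    then have "(perm_mat n p' :: 'a mat) $$ (p x, x) = 1"
      using True by (simp add: perm_mat_index flip: eq)
    then show ?thesis
      using True \<open>p x < n\<close> by (simp add: perm_mat_index split: if_splits)
  next
    case False
    then show ?thesis
      using permutes_not_in[OF p] permutes_not_in[OF p'] by auto
  qed
qed

lemma mat_inv_perm_mat:
  assumes p: "p permutes {..<n}"
  shows "mat_inv n (perm_mat n p) = (perm_mat n (Hilbert_Choice.inv p) :: 'a::comm_ring_1 mat)"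
  unfolding mat_inv_def
proof (rule the_equality)
  have right: "(perm_mat n p :: 'a mat) * perm_mat n (Hilbert_Choice.inv p) = 1\<^sub>m n"
    by (simp add: perm_mat_mult[OF permutes_inv[OF p]] permutes_inv_o[OF p] perm_mat_id)
  have left: "(perm_mat n (Hilbert_Choice.inv p) :: 'a mat) * perm_mat n p = 1\<^sub>m n"
    by (simp add: perm_mat_mult[OF p] permutes_inv_o[OF p] perm_mat_id)
  show "perm_mat n (Hilbert_Choice.inv p) \<in> carrier_mat n n \<and> inverts_mat (perm_mat n p :: 'a mat) (perm_mat n (Hilbert_Choice.inv p))
      \<and> inverts_mat (perm_mat n (Hilbert_Choice.inv p)) (perm_mat n p :: 'a mat)"
    using left right by (simp add: inverts_mat_def perm_mat_def)
  fix B :: "'a mat"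
  assume "B \<in> carrier_mat n n \<and> inverts_mat (perm_mat n p) B \<and> inverts_mat B (perm_mat n p)"
  then have B: "B \<in> carrier_mat n n" "B * perm_mat n p = 1\<^sub>m n"
    by (auto simp: inverts_mat_def perm_mat_def)
  have "B = B * (perm_mat n p * perm_mat n (Hilbert_Choice.inv p))"
    using B(1) by (simp add: right)
  also have "\<dots> = (B * perm_mat n p) * perm_mat n (Hilbert_Choice.inv p)"
    using B(1) by (simp add: assoc_mult_mat[of B n n _ n _ n])
  finally show "B = perm_mat n (Hilbert_Choice.inv p)"
    using B(2) left_mult_one_mat[OF perm_mat_carrier] by simp
qed

fun word_perm :: "nat list \<Rightarrow> nat \<Rightarrow> nat" where
  "word_perm [] = id"
| "word_perm (i # ws) = Transposition.transpose i (Suc i) \<circ> word_perm ws"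

lemma word_perm_permutes: "\<forall>i\<in>set ws. Suc i < n \<Longrightarrow> word_perm ws permutes {..<n}"
proof (induction ws)
  case Nil
  then show ?case
    using permutes_id[of "{..<n}"] by (simp add: id_def)
next
  case (Cons i ws)
  then have "word_perm ws permutes {..<n}" "Suc i < n"
    by auto
  then show ?case
    using permutes_compose[OF _ permutes_swap_id[of i "{..<n}" "Suc i"]] by (simp add: comp_def)
qed

lemma foldr_simple_refl_eq_perm_mat:
  "\<forall>i\<in>set ws. Suc i < n \<Longrightarrow>
     foldr (\<lambda>i M. simple_refl n i * M) ws (1\<^sub>m n) = (perm_mat n (word_perm ws) :: 'a::comm_ring_1 mat)"
proof (induction ws)
  case Nil
  then show ?case
    by (simp add: perm_mat_id[unfolded id_def])
next
  case (Cons i ws)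
  then have "\<forall>i\<in>set ws. Suc i < n"
    by simp
  then have "simple_refl n i * perm_mat n (word_perm ws) = (perm_mat n (word_perm (i # ws)) :: 'a mat)"
    unfolding simple_refl_def word_perm.simps by (rule perm_mat_mult[OF word_perm_permutes])
  then show ?case
    using Cons by (simp add: comp_def)
qed

lemma card_inversions_adjacent_swap_le:
  assumes w: "w permutes {..<n}" and k: "Suc k < n"
  shows "card (inversions n (Transposition.transpose k (Suc k) \<circ> w)) \<le> card (inversions n w) + 1"
proof -
  obtain al be where al: "w al = k" and be: "w be = Suc k"
    using permutes_surj[OF w] by (metis surjD)
  have "inversions n (Transposition.transpose k (Suc k) \<circ> w) \<subseteq> insert (al, be) (inversions n w)"
  proof
    fix x
    assume x: "x \<in> inversions n (Transposition.transpose k (Suc k) \<circ> w)"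
    obtain i j where ij: "x = (i,j)"
      by (cases x)
    show "x \<in> insert (al, be) (inversions n w)"
    proof (cases "w j < w i")
      case False
      then have "w i = k" "w j = Suc k"
        using x unfolding ij inversions_def by (auto simp: transpose_def split: if_splits)
      then have "i = al" "j = be"
        using al be inj_eq[OF permutes_inj[OF w]] by metis+
      then show ?thesis
        using ij by simp
    qed (use x ij in \<open>auto simp: inversions_def\<close>)
  qed
  then have "card (inversions n (Transposition.transpose k (Suc k) \<circ> w)) \<le> card (insert (al, be) (inversions n w))"
    by (intro card_mono) (simp add: finite_inversions)
  also have "\<dots> \<le> card (inversions n w) + 1"
    by (simp add: card_insert_if finite_inversions)
  finally show ?thesis .
qed

lemma card_inversions_adjacent_swap_less:
  assumes w: "w permutes {..<n}" and k: "Suc k < n"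
    and al: "al < n" "w al = k" and be: "w be = Suc k" "be < al"
  shows "card (inversions n (Transposition.transpose k (Suc k) \<circ> w)) < card (inversions n w)"
proof -
  let ?w = "Transposition.transpose k (Suc k) \<circ> w"
  have "(?w \<circ> Transposition.transpose be al) i = w i" for i
  proof -
    consider "i = be" | "i = al" | "i \<noteq> be" "i \<noteq> al"
      by blast
    then show ?thesis
    proof cases
      case 3
      then have "w i \<noteq> k" "w i \<noteq> Suc k"
        using al(2) be(1) inj_eq[OF permutes_inj[OF w]] by metis+
      then show ?thesis
        using 3 by (simp add: transpose_def)
    qed (use al be in \<open>auto simp: transpose_def\<close>)
  qed
  then have "?w \<circ> Transposition.transpose be al = w"
    by auto
  moreover have "card (inversions n ?w) < card (inversions n (?w \<circ> Transposition.transpose be al))"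
    by (rule card_inversions_swap_less) (use al be in auto)
  ultimately show ?thesis
    by simp
qed

lemma adjacent_descent_exists:
  assumes w: "w permutes {..<n}" and "w \<noteq> id"
  obtains k al be where "Suc k < n" "al < n" "w al = k" "w be = Suc k" "be < al"
proof -
  have ex: "\<exists>i. w i \<noteq> i"
    using \<open>w \<noteq> id\<close> by auto
  define a where "a = (LEAST i. w i \<noteq> i)"
  have wa: "w a \<noteq> a"
    unfolding a_def by (rule LeastI_ex[OF ex])
  have below: "w i = i" if "i < a" for i
    using that not_less_Least unfolding a_def by blast
  have "a < n"
    using wa permutes_not_in[OF w, of a] by (cases "a < n") auto
  then have wan: "w a < n"
    using permutes_in_image[OF w] by auto
  have "a < w a"
  proof (rule ccontr)
    assume "\<not> a < w a"
    then have "w (w a) = w a"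
      using wa below by simp
    then show False
      using wa permutes_inj[OF w] by (auto dest: injD)
  qed
  obtain al where al: "w al = w a - 1"
    using permutes_surj[OF w] by (metis surjD)
  have "w al < n"
    using al wan by simp
  then have "al < n"
    using permutes_in_image[OF w, of al] by simp
  moreover have "a < al"
  proof (rule ccontr)
    assume "\<not> a < al"
    then have "al < a \<or> al = a"
      by auto
    then show False
      using al below[of al] \<open>a < w a\<close> by auto
  qed
  ultimately show ?thesis
    using that[of "w a - 1" al a] al \<open>a < w a\<close> wan by simp
qed

lemma word_perm_exists:
  assumes "w permutes {..<n}"
  obtains ws where "\<forall>i\<in>set ws. Suc i < n" "word_perm ws = w" "length ws \<le> card (inversions n w)"
  using assms
proof (induction "card (inversions n w)" arbitrary: w thesis rule: less_induct)
  case less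
  show ?case
  proof (cases "w = id")
    case True
    then show ?thesis
      using less.prems(1)[of "[]"] by simp
  next
    case False
    obtain k al be where d: "Suc k < n" "al < n" "w al = k" "w be = Suc k" "be < al"
      using adjacent_descent_exists[OF less.prems(2) False] by blast
    let ?w = "Transposition.transpose k (Suc k) \<circ> w"
    have shorter: "card (inversions n ?w) < card (inversions n w)"
      using card_inversions_adjacent_swap_less[OF less.prems(2) d(1,2,3,4,5)] .
    have "?w permutes {..<n}"
      using less.prems(2) d(1) by (auto intro!: permutes_compose permutes_swap_id)
    then obtain ws where ws: "\<forall>i\<in>set ws. Suc i < n" "word_perm ws = ?w" "length ws \<le> card (inversions n ?w)"
      using less.hyps[OF shorter] by blast
    have "word_perm (k # ws) = w"
      using ws(2) by (auto simp: fun_eq_iff)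
    then show ?thesis
      using less.prems(1)[of "k # ws"] ws d shorter by simp
  qed
qed

lemma card_inversions_word_perm_le: "\<forall>i\<in>set ws. Suc i < n \<Longrightarrow> card (inversions n (word_perm ws)) \<le> length ws"
proof (induction ws)
  case Nil
  have "inversions n (\<lambda>i. i) = {}"
    by (auto simp: inversions_def)
  then show ?case
    by simp
next
  case (Cons i ws)
  then show ?case
    using card_inversions_adjacent_swap_le[OF word_perm_permutes, of ws n i] by (simp add: comp_def)
qed

lemma wlen_perm_mat:
  assumes p: "p permutes {..<n}"
  shows "wlen n (perm_mat n p :: 'a::comm_ring_1 mat) = card (inversions n p)"
proof -
  let ?P = "\<lambda>k. \<exists>ws. length ws = k \<and> (\<forall>i\<in>set ws. Suc i < n) \<and>
      (perm_mat n p :: 'a mat) = foldr (\<lambda>i M. simple_refl n i * M) ws (1\<^sub>m n)"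
  obtain ws0 where ws0: "\<forall>i\<in>set ws0. Suc i < n" "word_perm ws0 = p" "length ws0 \<le> card (inversions n p)"
    using word_perm_exists[OF p] by blast
  then have "(perm_mat n p :: 'a mat) = foldr (\<lambda>i M. simple_refl n i * M) ws0 (1\<^sub>m n)"
    using foldr_simple_refl_eq_perm_mat[OF ws0(1), where 'a = 'a] by simp
  with ws0(1) have "?P (length ws0)"
    by blast
  then have upper: "wlen n (perm_mat n p :: 'a mat) \<le> card (inversions n p)"
    unfolding wlen_def using Least_le[of ?P] ws0(3) by fastforce
  have "?P (wlen n (perm_mat n p :: 'a mat))"
    unfolding wlen_def by (rule LeastI[of ?P, OF \<open>?P (length ws0)\<close>])
  then obtain ws where ws: "length ws = wlen n (perm_mat n p :: 'a mat)" "\<forall>i\<in>set ws. Suc i < n"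
      "(perm_mat n p :: 'a mat) = foldr (\<lambda>i M. simple_refl n i * M) ws (1\<^sub>m n)"
    by blast
  then have "(perm_mat n p :: 'a mat) = perm_mat n (word_perm ws)"
    using foldr_simple_refl_eq_perm_mat[OF ws(2)] by simp
  then have "p = word_perm ws"
    by (rule perm_mat_inject[OF p word_perm_permutes[OF ws(2)]])
  then show ?thesis
    using card_inversions_word_perm_le[OF ws(2)] ws(1) upper by simp
qed

lemma mult_perm_mat_index:
  assumes A: "A \<in> carrier_mat n n" and q: "q permutes {..<n}" and ij: "i < n" "j < n"
  shows "(A * perm_mat n q) $$ (i,j) = A $$ (i, q j)"
proof -
  have "q j < n"
    using ij permutes_in_image[OF q] by auto
  have "(A * perm_mat n q) $$ (i,j) = (\<Sum>m<n. A $$ (i,m) * perm_mat n q $$ (m,j))"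
    by (rule mat_mult_index[OF A perm_mat_carrier ij])
  also have "\<dots> = (\<Sum>m<n. if m = q j then A $$ (i,m) else 0)"
    by (rule sum.cong) (use ij in \<open>auto simp: perm_mat_index\<close>)
  finally show ?thesis
    using \<open>q j < n\<close> by simp
qed

lemma perm_mat_inv_mult_index:
  assumes A: "A \<in> carrier_mat n n" and p: "p permutes {..<n}" and ij: "i < n" "j < n"
  shows "(perm_mat n (Hilbert_Choice.inv p) * A) $$ (i,j) = A $$ (p i, j)"
proof -
  have "p i < n"
    using ij permutes_in_image[OF p] by auto
  have "(perm_mat n (Hilbert_Choice.inv p) * A) $$ (i,j) = (\<Sum>m<n. perm_mat n (Hilbert_Choice.inv p) $$ (i,m) * A $$ (m,j))"
    by (rule mat_mult_index[OF perm_mat_carrier A ij])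
  also have "\<dots> = (\<Sum>m<n. if m = p i then A $$ (m,j) else 0)"
    by (rule sum.cong) (use ij permutes_inverses[OF p] in \<open>auto simp: perm_mat_index\<close>)
  finally show ?thesis
    using \<open>p i < n\<close> by simp
qed

lemma perm_mat_inv_mult_mult_perm_mat_index:
  assumes A: "A \<in> carrier_mat n n" and p: "p permutes {..<n}" and q: "q permutes {..<n}"
    and ij: "i < n" "j < n"
  shows "(perm_mat n (Hilbert_Choice.inv p) * A * perm_mat n q) $$ (i,j) = A $$ (p i, q j)"
proof -
  have "q j < n"
    using ij permutes_in_image[OF q] by auto
  then show ?thesis
    using mult_perm_mat_index[OF mult_carrier_mat[OF perm_mat_carrier A] q ij]
      perm_mat_inv_mult_index[OF A p ij(1)] by simp
qed

lemma mult_diag_mult_index: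
  assumes A: "A \<in> carrier_mat n n" and L: "L \<in> carrier_mat n n" and B: "B \<in> carrier_mat n n"
    and diag: "\<And>i j. i < n \<Longrightarrow> j < n \<Longrightarrow> i \<noteq> j \<Longrightarrow> L $$ (i,j) = 0"
    and ij: "i < n" "j < n"
  shows "(A * L * B) $$ (i,j) = (\<Sum>a<n. A $$ (i,a) * L $$ (a,a) * B $$ (a,j))"
proof -
  have AL: "(A * L) $$ (i,a) = A $$ (i,a) * L $$ (a,a)" if "a < n" for a
  proof -
    have "(A * L) $$ (i,a) = (\<Sum>m<n. A $$ (i,m) * L $$ (m,a))"
      by (rule mat_mult_index[OF A L ij(1) that])
    also have "\<dots> = (\<Sum>m<n. if m = a then A $$ (i,a) * L $$ (a,a) else 0)"
      by (rule sum.cong) (use diag that in auto)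
    finally show ?thesis
      using that by simp
  qed
  have "(A * L * B) $$ (i,j) = (\<Sum>a<n. (A * L) $$ (i,a) * B $$ (a,j))"
    by (rule mat_mult_index[OF mult_carrier_mat[OF A L] B ij])
  then show ?thesis
    using AL by simp
qed

definition lower_right_block :: "nat \<Rightarrow> nat \<Rightarrow> 'a::comm_ring_1 mat \<Rightarrow> 'a mat" where
  "lower_right_block n k A = mat n n (\<lambda>(i,j). if i < k \<or> j < k then (if i = j then 1 else 0) else A $$ (i,j))"

lemma lower_right_block_carrier [simp]: "lower_right_block n k A \<in> carrier_mat n n"
  unfolding lower_right_block_def by simp

lemma lower_right_block_dims [simp]:
  "dim_row (lower_right_block n k A) = n" "dim_col (lower_right_block n k A) = n"
  unfolding lower_right_block_def by simp_all

lemma lower_right_block_index: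
  "i < n \<Longrightarrow> j < n \<Longrightarrow>
    lower_right_block n k A $$ (i,j) = (if i < k \<or> j < k then (if i = j then 1 else 0) else A $$ (i,j))"
  unfolding lower_right_block_def by simp

lemma lower_right_block_mult_diag_mult:
  assumes u: "u \<in> carrier_mat n n" "upper_triangular u"
    and l: "l \<in> carrier_mat n n" "\<And>i j. i < n \<Longrightarrow> j < n \<Longrightarrow> i \<noteq> j \<Longrightarrow> l $$ (i,j) = 0"
    and v: "v \<in> carrier_mat n n"
  shows "lower_right_block n k (u * l * v)
           = lower_right_block n k u * lower_right_block n k l * lower_right_block n k v"
    (is "?D = ?U * ?L * ?V")
proof (rule eq_matI)
  fix i j
  assume "i < dim_row (?U * ?L * ?V)" "j < dim_col (?U * ?L * ?V)"
  then have ij: "i < n" "j < n"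
    by auto
  have "(?U * ?L * ?V) $$ (i,j) = (\<Sum>a<n. ?U $$ (i,a) * ?L $$ (a,a) * ?V $$ (a,j))"
    by (rule mult_diag_mult_index) (use l ij in \<open>auto simp: lower_right_block_index\<close>)
  also have "\<dots> = ?D $$ (i,j)"
  proof (cases "i < k \<or> j < k")
    case True
    then have "(\<Sum>a<n. ?U $$ (i,a) * ?L $$ (a,a) * ?V $$ (a,j)) = (\<Sum>a<n. if a = i then (if i = j then 1 else 0) else 0)"
      by (intro sum.cong) (use ij in \<open>auto simp: lower_right_block_index\<close>)
    then show ?thesis
      using True ij by (simp add: lower_right_block_index)
  next
    case False
    have "(\<Sum>a<n. ?U $$ (i,a) * ?L $$ (a,a) * ?V $$ (a,j)) = (\<Sum>a<n. u $$ (i,a) * l $$ (a,a) * v $$ (a,j))"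
    proof (rule sum.cong)
      fix a
      assume "a \<in> {..<n}"
      then show "?U $$ (i,a) * ?L $$ (a,a) * ?V $$ (a,j) = u $$ (i,a) * l $$ (a,a) * v $$ (a,j)"
        using False ij u unfolding upper_triangular_def by (auto simp: lower_right_block_index)
    qed simp
    then show ?thesis
      using False ij mult_diag_mult_index[OF u(1) l(1) v l(2) ij] l(2) by (simp add: lower_right_block_index)
  qed
  finally show "?D $$ (i,j) = (?U * ?L * ?V) $$ (i,j)"
    by simp
qed auto

lemma prod_diag_lower_right_block:
  "(\<Prod>i\<in>{0..<n}. lower_right_block n k A $$ (i,i)) = (\<Prod>i\<in>{k..<n}. A $$ (i,i))"
  by (rule prod.mono_neutral_cong_right) (auto simp: lower_right_block_index)

lemma det_lower_right_block_upper_triangular: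
  assumes "A \<in> carrier_mat n n" "upper_triangular A"
  shows "det (lower_right_block n k A) = (\<Prod>i\<in>{k..<n}. A $$ (i,i))"
proof -
  have "upper_triangular (lower_right_block n k A)"
    using assms unfolding upper_triangular_def by (auto simp: lower_right_block_index)
  then show ?thesis
    by (simp add: det_upper_triangular[of _ n] prod_list_diag_prod prod_diag_lower_right_block)
qed

lemma det_lower_right_block_lower_triangular:
  assumes "A \<in> carrier_mat n n" "\<And>i j. i < j \<Longrightarrow> j < n \<Longrightarrow> A $$ (i,j) = 0"
  shows "det (lower_right_block n k A) = (\<Prod>i\<in>{k..<n}. A $$ (i,i))"
proof -
  have "det (lower_right_block n k A) = prod_list (diag_mat (lower_right_block n k A))"
    by (rule det_lower_triangular[of n]) (use assms in \<open>auto simp: lower_right_block_index\<close>)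
  then show ?thesis
    by (simp add: prod_list_diag_prod prod_diag_lower_right_block)
qed

lemma det_dvd_one_if_invertible:
  fixes A :: "'a::comm_ring_1 mat"
  assumes A: "A \<in> carrier_mat n n" and "invertible_mat A"
  shows "det A dvd 1"
proof -
  obtain B where AB: "A * B = 1\<^sub>m n" and BA: "B * A = 1\<^sub>m (dim_row B)"
    using \<open>invertible_mat A\<close> A unfolding invertible_mat_def inverts_mat_def by auto
  have "dim_col B = n"
    using arg_cong[OF AB, of dim_col] by simp
  moreover have "dim_row B = n"
    using arg_cong[OF BA, of dim_col] A by simp
  ultimately have "B \<in> carrier_mat n n"
    by auto
  then have "det A * det B = det (A * B)"
    using det_mult[OF A] by simp
  then have "det A * det B = 1"
    using AB by simp
  then show ?thesis
    by (metis dvdI)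
qed

lemma det_lower_right_block_ULV_dvd_one:
  fixes u l v :: "'a::comm_ring_1 mat"
  assumes u: "u \<in> Umat n" and l: "l \<in> Lmat n" and v: "v \<in> Vmat n"
  shows "det (lower_right_block n k (u * l * v)) dvd 1"
proof -
  have carrier: "u \<in> carrier_mat n n" "l \<in> carrier_mat n n" "v \<in> carrier_mat n n"
    using u l v unfolding Umat_def Lmat_def Vmat_def GL_def by auto
  have u_upper: "upper_triangular u" and l_upper: "upper_triangular l"
    using u l carrier unfolding Umat_def Lmat_def upper_triangular_def by auto
  have l_diag: "\<And>i j. i < n \<Longrightarrow> j < n \<Longrightarrow> i \<noteq> j \<Longrightarrow> l $$ (i,j) = 0"
    using l unfolding Lmat_def by auto
  have "det (lower_right_block n k u) = (\<Prod>i\<in>{k..<n}. u $$ (i,i))"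
    by (rule det_lower_right_block_upper_triangular[OF carrier(1) u_upper])
  also have "\<dots> = 1"
    using u by (intro prod.neutral) (auto simp: Umat_def)
  finally have det_u: "det (lower_right_block n k u) = 1" .
  have v_lower: "\<And>i j. i < j \<Longrightarrow> j < n \<Longrightarrow> v $$ (i,j) = 0"
    using v unfolding Vmat_def by auto
  have "det (lower_right_block n k v) = (\<Prod>i\<in>{k..<n}. v $$ (i,i))"
    by (rule det_lower_right_block_lower_triangular[OF carrier(3) v_lower])
  also have "\<dots> = 1"
    using v by (intro prod.neutral) (auto simp: Vmat_def)
  finally have det_v: "det (lower_right_block n k v) = 1" .
  have "det l dvd 1"
    using l carrier(2) by (intro det_dvd_one_if_invertible) (auto simp: Lmat_def GL_def)
  moreover have "det (lower_right_block n k l) dvd det l"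
    using det_upper_triangular[OF l_upper carrier(2)] carrier(2)
    by (simp add: det_lower_right_block_upper_triangular[OF carrier(2) l_upper] prod_list_diag_prod
        prod_dvd_prod_subset)
  ultimately have "det (lower_right_block n k l) dvd 1"
    by (rule dvd_trans[rotated])
  then show ?thesis
    using det_u det_v
    by (simp add: lower_right_block_mult_diag_mult[OF carrier(1) u_upper carrier(2) l_diag carrier(3)]
        det_mult[OF mult_carrier_mat[OF lower_right_block_carrier lower_right_block_carrier]
          lower_right_block_carrier] det_mult[OF lower_right_block_carrier lower_right_block_carrier])
qed

lemma nonzero_transversal_if_det_nonzero:
  assumes A: "A \<in> carrier_mat n n" and "det A \<noteq> 0"
  obtains \<sigma> where "\<sigma> permutes {0..<n}" "\<And>i. i < n \<Longrightarrow> A $$ (i, \<sigma> i) \<noteq> 0"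
proof -
  have "(\<Sum>\<sigma> \<in> {\<sigma>. \<sigma> permutes {0..<n}}. signof \<sigma> * (\<Prod>i = 0..<n. A $$ (i, \<sigma> i))) \<noteq> 0"
    using assms by (simp add: det_def')
  then obtain \<sigma> where \<sigma>: "\<sigma> permutes {0..<n}" and nz: "(\<Prod>i = 0..<n. A $$ (i, \<sigma> i)) \<noteq> 0"
    by (metis (mono_tags) mem_Collect_eq mult_zero_right sum.neutral)
  have "A $$ (i, \<sigma> i) \<noteq> 0" if "i < n" for i
  proof
    assume "A $$ (i, \<sigma> i) = 0"
    then have "(\<Prod>i = 0..<n. A $$ (i, \<sigma> i)) = 0"
      using that by (intro prod_zero) auto
    with nz show False
      by simp
  qed
  with \<sigma> show ?thesis
    using that by blast
qed

lemma transversal_lower_right_block: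
  assumes \<sigma>: "\<sigma> permutes {0..<n}" and nz: "\<And>i. i < n \<Longrightarrow> lower_right_block n k A $$ (i, \<sigma> i) \<noteq> 0"
    and i: "k \<le> i" "i < n"
  shows "k \<le> \<sigma> i"
proof (rule ccontr)
  assume "\<not> k \<le> \<sigma> i"
  have "\<sigma> i < n" "\<sigma> (\<sigma> i) < n"
    using i permutes_in_image[OF \<sigma>] by auto
  then have "\<sigma> (\<sigma> i) = \<sigma> i"
    using nz[of "\<sigma> i"] \<open>\<not> k \<le> \<sigma> i\<close> by (auto simp: lower_right_block_index split: if_splits)
  then have "\<sigma> i = i"
    using inj_eq[OF permutes_inj[OF \<sigma>]] by metis
  then show False
    using i \<open>\<not> k \<le> \<sigma> i\<close> by simp
qed

lemma ULV_eq_permuted_upper_imp_bruhat_le: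
  fixes u l v u' :: "'a::comm_ring_1 mat"
  assumes u: "u \<in> Umat n" and l: "l \<in> Lmat n" and v: "v \<in> Vmat n" and u': "u' \<in> Umat n"
    and p: "p permutes {..<n}" and q: "q permutes {..<n}"
    and eq: "u * l * v = perm_mat n (Hilbert_Choice.inv p) * u' * perm_mat n q"
  shows "bruhat_le n q p"
  unfolding bruhat_le_def
proof (intro allI)
  fix k c
  let ?D = "lower_right_block n k (u * l * v)"
  have u'_carrier: "u' \<in> carrier_mat n n" and u'_upper: "\<And>i j. i < n \<Longrightarrow> j < i \<Longrightarrow> u' $$ (i,j) = 0"
    using u' unfolding Umat_def GL_def by auto
  have entry: "(u * l * v) $$ (i,j) = u' $$ (p i, q j)" if "i < n" "j < n" for i j
    unfolding eq by (rule perm_mat_inv_mult_mult_perm_mat_index[OF u'_carrier p q that])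
  have "det ?D \<noteq> 0"
    using det_lower_right_block_ULV_dvd_one[OF u l v, of k] by auto
  then obtain \<sigma> where \<sigma>: "\<sigma> permutes {0..<n}" and nz: "\<And>i. i < n \<Longrightarrow> ?D $$ (i, \<sigma> i) \<noteq> 0"
    using nonzero_transversal_if_det_nonzero[OF lower_right_block_carrier] by blast
  define I where "I = {i. k \<le> i \<and> i < n \<and> c < p i}"
  define J where "J = {j. k \<le> j \<and> j < n \<and> c < q j}"
  have "\<sigma> ` I \<subseteq> J"
  proof
    fix j
    assume "j \<in> \<sigma> ` I"
    then obtain i where "j = \<sigma> i" "k \<le> i" "i < n" "c < p i"
      unfolding I_def by auto
    moreover have "k \<le> \<sigma> i" "\<sigma> i < n"
      using transversal_lower_right_block[OF \<sigma> nz] \<open>k \<le> i\<close> \<open>i < n\<close> permutes_in_image[OF \<sigma>] by auto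
    moreover have "p i < n"
      using \<open>i < n\<close> permutes_in_image[OF p] by auto
    moreover have "u' $$ (p i, q (\<sigma> i)) \<noteq> 0"
      using nz[OF \<open>i < n\<close>] entry[OF \<open>i < n\<close> \<open>\<sigma> i < n\<close>] \<open>k \<le> i\<close> \<open>k \<le> \<sigma> i\<close> \<open>i < n\<close> \<open>\<sigma> i < n\<close>
      by (simp add: lower_right_block_index)
    ultimately show "j \<in> J"
      using u'_upper[of "p i" "q (\<sigma> i)"] unfolding J_def by force
  qed
  then have "card I \<le> card J"
    by (intro card_inj_on_le[OF inj_on_subset[OF permutes_inj[OF \<sigma>]]]) (auto simp: J_def)
  then show "count_above p k n c \<le> count_above q k n c"
    unfolding count_above_eq_card I_def J_def .
qed

theorem proposition3p2:
  fixes n :: nat and r t :: "'a::{comm_ring_1,finite} mat"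
  assumes "local_ring TYPE('a)"
    and "r \<in> Wmat n" and "t \<in> Wmat n"
    and "wlen n t \<le> wlen n r" and "t \<noteq> r"
  shows "{u * l * v | u l v. u \<in> Umat n \<and> l \<in> Lmat n \<and> v \<in> Vmat n}
           \<inter> {mat_inv n t * u * r | u. u \<in> Umat n} = {}"
proof (rule ccontr)
  obtain q where q: "q permutes {..<n}" "r = perm_mat n q"
    using \<open>r \<in> Wmat n\<close> unfolding Wmat_def by blast
  obtain p where p: "p permutes {..<n}" "t = perm_mat n p"
    using \<open>t \<in> Wmat n\<close> unfolding Wmat_def by blast
  assume "{u * l * v | u l v. u \<in> Umat n \<and> l \<in> Lmat n \<and> v \<in> Vmat n}
           \<inter> {mat_inv n t * u * r | u. u \<in> Umat n} \<noteq> {}"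
  then obtain u l v u' where "u \<in> Umat n" "l \<in> Lmat n" "v \<in> Vmat n" "u' \<in> Umat n"
    and "u * l * v = mat_inv n t * u' * r"
    by blast
  then have "bruhat_le n q p"
    using ULV_eq_permuted_upper_imp_bruhat_le p(1) q(1)
    unfolding p(2) q(2) mat_inv_perm_mat[OF p(1)] by blast
  moreover have "q \<noteq> p"
    using \<open>t \<noteq> r\<close> p(2) q(2) by blast
  ultimately have "card (inversions n q) < card (inversions n p)"
    using card_inversions_less_if_bruhat_le[OF p(1) q(1)] by blast
  then show False
    using \<open>wlen n t \<le> wlen n r\<close>
    unfolding p(2) q(2) wlen_perm_mat[OF p(1)] wlen_perm_mat[OF q(1)] by simp
qed

end
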